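(* Let $g^{ij}(u)=\sum_{s,k}\frac{1-\delta^{sk}}{p_sp_k}\frac{\partial u_i}{\partial p_s}\frac{\partial u_j}{\partial p_k}$, viewed as a polynomial in $u_1,\dots,u_n$. The Lie derivative of this intersection form with respect to the vector field $\frac{\partial}{\partial u_{n-1}}$ is given by $$\eta^{ij}(u)=\frac{\partial g^{ij}}{\partial u_{n-1}}(u)=4(2n-i-j)\,u_{i+j-n-1},\qquad i,j=1,\dots,n.$$ Hence $\eta^{ij}(u)$ is a non-degenerate Hankel matrix with all entries above the anti-diagonal vanishing; in particular the anti-diagonal entries are $\eta^{i,n-i+1}(u)=4(n-1)$.
   Context: $n\ge2$. $u_k=\sum_{1\le i_1<\dots<i_k\le n}p_{i_1}^2\cdots p_{i_k}^2$ for $k=1,\dots,n$; conventions $u_0=1$ and $u_k=0$ for $k<0$ and $k>n$. "Above the anti-diagonal" means entries with $i+j<n+1$. *)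

theory Defs
  imports Complex_Main "Jordan_Normal_Form.Determinant"
begin

(* u_k = e_k(p_1^2,...,p_n^2); automatically u_0 = 1 and u_k = 0 for k > n *)
definition usym :: "nat \<Rightarrow> (nat \<Rightarrow> real) \<Rightarrow> nat \<Rightarrow> real" where
  "usym n p k = (\<Sum>S | S \<subseteq> {1..n} \<and> card S = k. \<Prod>i\<in>S. (p i)^2)"

definition dudp :: "nat \<Rightarrow> nat \<Rightarrow> nat \<Rightarrow> (nat \<Rightarrow> real) \<Rightarrow> real" where
  "dudp n i s p = (THE D. ((\<lambda>t. usym n (p(s := t)) i) has_real_derivative D) (at (p s)))"

definition gform :: "nat \<Rightarrow> nat \<Rightarrow> nat \<Rightarrow> (nat \<Rightarrow> real) \<Rightarrow> real" where
  "gform n i j p = (\<Sum>s\<in>{1..n}. \<Sum>k\<in>{1..n}.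
      (if s = k then 0 else 1) / (p s * p k) * dudp n i s p * dudp n j k p)"

inductive mpoly_fun :: "nat \<Rightarrow> ((nat \<Rightarrow> real) \<Rightarrow> real) \<Rightarrow> bool" for n where
  const: "mpoly_fun n (\<lambda>u. c)"
| var: "1 \<le> k \<Longrightarrow> k \<le> n \<Longrightarrow> mpoly_fun n (\<lambda>u. u k)"
| add: "mpoly_fun n f \<Longrightarrow> mpoly_fun n g \<Longrightarrow> mpoly_fun n (\<lambda>u. f u + g u)"
| mult: "mpoly_fun n f \<Longrightarrow> mpoly_fun n g \<Longrightarrow> mpoly_fun n (\<lambda>u. f u * g u)"

definition ucv :: "nat \<Rightarrow> (nat \<Rightarrow> real) \<Rightarrow> int \<Rightarrow> real" where
  "ucv n u k = (if k = 0 then 1 else if 1 \<le> k \<and> k \<le> int n then u (nat k) else 0)"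

definition eta :: "nat \<Rightarrow> (nat \<Rightarrow> real) \<Rightarrow> nat \<Rightarrow> nat \<Rightarrow> real" where
  "eta n u i j = 4 * (2 * real n - real i - real j) * ucv n u (int i + int j - int n - 1)"

end

(*
  Write x_s = p_s^2, so that u_k = e_k(x), and let e_k(x without s) denote the elementary
  symmetric functions of the remaining variables. Since du_(a+1)/dp_s = 2 p_s e_a(x without s),
  the weights 1/(p_s p_k) cancel and g^(a+1,b+1) = 4 * sum over s /= k of
  e_a(x without s) e_b(x without k). The full double sum factors, because the sum over s of
  e_a(x without s) is (n-a) e_a. The diagonal part is handled with e_(c+1) =
  e_(c+1)(x without s) + x_s e_c(x without s): this lets the indices (a, b+1) be traded for
  (a+1, b), and telescoping expresses it as (n-a) e_a e_b + sum_(l=1..b) (b-a-2l) e_(a+l) e_(b-l).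
  Hence g is an explicit quadratic polynomial in u. In it u_(n-1) occurs only through the terms
  with a = n-1 or a + l = n-1, and differentiating gives eta.

  The polynomial representing g is unique: two candidates agree on the image of p -> u, and on
  every line through the point u(p) with p_s = sqrt s this image contains a punctured
  neighbourhood of that point, because a small perturbation of the coefficients of
  prod_s (y - s) keeps n simple positive roots, located by the intermediate value theorem
  between consecutive half-integers. Finally eta vanishes above the anti-diagonal and
  equals 4(n-1) on it, so reversing its rows gives a triangular matrix with nonzero diagonal.
*)
theory Submission
  imports Defs
begin

definition esym :: "'a set \<Rightarrow> ('a \<Rightarrow> 'b::comm_ring_1) \<Rightarrow> nat \<Rightarrow> 'b" where
  "esym X x k = (\<Sum>S | S \<subseteq> X \<and> card S = k. \<Prod>i\<in>S. x i)"

lemma esym_cong: "(\<And>i. i \<in> X \<Longrightarrow> x i = y i) \<Longrightarrow> esym X x k = esym X y k"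
  unfolding esym_def by (intro sum.cong refl prod.cong) auto

lemma esym_0 [simp]: "finite X \<Longrightarrow> esym X x 0 = 1"
proof -
  assume "finite X"
  then have "{S. S \<subseteq> X \<and> card S = 0} = {{}}"
    by (auto dest: finite_subset)
  then show ?thesis by (simp add: esym_def)
qed

lemma esym_eq_0_if_card_less: "finite X \<Longrightarrow> card X < k \<Longrightarrow> esym X x k = 0"
  unfolding esym_def by (rule sum.neutral) (auto dest: card_mono)

lemma esym_insert:
  assumes "finite X" "s \<notin> X"
  shows "esym (insert s X) x (Suc k) = esym X x (Suc k) + x s * esym X x k"
proof -
  let ?P = "\<lambda>k. {S. S \<subseteq> X \<and> card S = k}"
  have fin: "finite (?P k)" for k
    using assms(1) by (auto intro: finite_subset[of _ "Pow X"])
  have card_insert: "card (insert s T) = Suc (card T)" if "T \<subseteq> X" for T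
    using assms that by (metis card_insert_disjoint finite_subset subsetD)
  have split: "{S. S \<subseteq> insert s X \<and> card S = Suc k} = ?P (Suc k) \<union> insert s ` ?P k"
  proof (intro equalityI subsetI)
    fix S assume S: "S \<in> {S. S \<subseteq> insert s X \<and> card S = Suc k}"
    show "S \<in> ?P (Suc k) \<union> insert s ` ?P k"
    proof (cases "s \<in> S")
      case True
      then have "S = insert s (S - {s})" "S - {s} \<subseteq> X" using S by auto
      then have "S - {s} \<in> ?P k" using S card_insert by (metis (mono_tags) Suc_inject mem_Collect_eq)
      with \<open>S = insert s (S - {s})\<close> show ?thesis by blast
    qed (use S in auto)
  qed (use assms card_insert in auto)
  have "inj_on (insert s) (?P k)"
    using assms(2) by (intro inj_onI) (metis insert_ident mem_Collect_eq subsetD)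
  then have "(\<Sum>S\<in>insert s ` ?P k. \<Prod>i\<in>S. x i) = (\<Sum>T\<in>?P k. x s * (\<Prod>i\<in>T. x i))"
    using assms by (simp add: sum.reindex) (intro sum.cong refl prod.insert, auto dest: finite_subset)
  then show ?thesis
    unfolding esym_def split using assms(2) fin
    by (subst sum.union_disjoint) (auto simp: sum_distrib_left)
qed

lemma esym_remove:
  assumes "finite X" "s \<in> X"
  shows "esym X x (Suc k) = esym (X - {s}) x (Suc k) + x s * esym (X - {s}) x k"
  using esym_insert[of "X - {s}" s x k] assms by (simp add: insert_absorb)

lemma sum_esym_remove:
  assumes "finite X"
  shows "(\<Sum>s\<in>X. esym (X - {s}) x k) = (of_nat (card X) - of_nat k) * esym X x k"
proof -
  let ?P = "{S. S \<subseteq> X \<and> card S = k}"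
  have fin: "finite ?P"
    using assms by (auto intro: finite_subset[of _ "Pow X"])
  have "esym (X - {s}) x k = (\<Sum>S\<in>?P. if s \<notin> S then \<Prod>i\<in>S. x i else 0)" for s
  proof -
    have "{S. S \<subseteq> X - {s} \<and> card S = k} = {S \<in> ?P. s \<notin> S}" by auto
    then show ?thesis
      unfolding esym_def using sum.inter_filter[OF fin, where P = "\<lambda>S. s \<notin> S"] by simp
  qed
  then have "(\<Sum>s\<in>X. esym (X - {s}) x k) = (\<Sum>s\<in>X. \<Sum>S\<in>?P. if s \<notin> S then \<Prod>i\<in>S. x i else 0)"
    by simp
  also have "\<dots> = (\<Sum>S\<in>?P. of_nat (card (X - S)) * (\<Prod>i\<in>S. x i))"
    using assms by (subst sum.swap) (simp add: sum.If_cases Diff_eq Compl_eq)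
  also have "\<dots> = (\<Sum>S\<in>?P. (of_nat (card X) - of_nat k) * (\<Prod>i\<in>S. x i))"
    using assms by (intro sum.cong refl) (auto simp: card_Diff_subset finite_subset of_nat_diff card_mono)
  finally show ?thesis by (simp add: esym_def sum_distrib_left)
qed

lemma sum_esym_remove_mult_Suc:
  assumes "finite X"
  shows "(\<Sum>s\<in>X. esym (X - {s}) x a * esym (X - {s}) x (Suc b)) =
    (\<Sum>s\<in>X. esym (X - {s}) x (Suc a) * esym (X - {s}) x b)
    + (of_nat (card X) - of_nat a) * esym X x a * esym X x (Suc b)
    - (of_nat (card X) - of_nat b) * esym X x b * esym X x (Suc a)"
proof -
  have "esym (X - {s}) x a * esym (X - {s}) x (Suc b) =
      esym (X - {s}) x (Suc a) * esym (X - {s}) x b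
      + esym (X - {s}) x a * esym X x (Suc b) - esym (X - {s}) x b * esym X x (Suc a)"
    if "s \<in> X" for s
    using esym_remove[OF assms that, of x a] esym_remove[OF assms that, of x b]
    by (simp add: algebra_simps)
  then show ?thesis
    by (simp add: sum.distrib sum_subtractf sum_distrib_right[symmetric] sum_esym_remove[OF assms]
        mult.assoc)
qed

lemma sum_esym_remove_mult:
  assumes "finite X"
  shows "(\<Sum>s\<in>X. esym (X - {s}) x a * esym (X - {s}) x b) =
    (of_nat (card X) - of_nat a) * esym X x a * esym X x b
    + (\<Sum>l = 1..b. (of_nat b - of_nat a - 2 * of_nat l) * esym X x (a + l) * esym X x (b - l))"
proof (induction b arbitrary: a)
  case 0
  show ?case by (simp add: sum_esym_remove[OF assms] assms)
next
  case (Suc b)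
  let ?e = "esym X x"
  let ?f = "\<lambda>l. (of_nat (Suc b) - of_nat a - 2 * of_nat l) * ?e (a + l) * ?e (Suc b - l)"
  have "sum ?f {1..Suc b} = (\<Sum>l = 0..b. ?f (Suc l))"
    using sum.shift_bounds_cl_Suc_ivl[of ?f 0 b] by simp
  also have "\<dots> = ?f 1 + (\<Sum>l = 1..b. ?f (Suc l))"
    by (simp add: sum.atLeast_Suc_atMost)
  also have "(\<Sum>l = 1..b. ?f (Suc l)) =
      (\<Sum>l = 1..b. (of_nat b - of_nat (Suc a) - 2 * of_nat l) * ?e (Suc a + l) * ?e (b - l))"
    by (intro sum.cong refl) (simp add: algebra_simps)
  finally have shift: "sum ?f {1..Suc b} = ?f 1 +
      (\<Sum>l = 1..b. (of_nat b - of_nat (Suc a) - 2 * of_nat l) * ?e (Suc a + l) * ?e (b - l))" .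
  then show ?case
    unfolding sum_esym_remove_mult_Suc[OF assms] Suc.IH shift by (simp add: algebra_simps)
qed

lemma usym_eq_esym: "usym n p k = esym {1..n} (\<lambda>i. (p i)^2) k"
  by (simp add: usym_def esym_def)

lemma ucv_usym: "ucv n (usym n p) (int k) = usym n p k"
  by (simp add: ucv_def usym_eq_esym esym_eq_0_if_card_less)

lemma dudp_Suc:
  assumes "s \<in> {1..n}"
  shows "dudp n (Suc a) s p = 2 * p s * esym ({1..n} - {s}) (\<lambda>i. (p i)^2) a"
proof -
  let ?e = "\<lambda>k. esym ({1..n} - {s}) (\<lambda>i. (p i)^2) k"
  have "esym ({1..n} - {s}) (\<lambda>i. ((p(s := t)) i)^2) c = ?e c" for t c
    by (rule esym_cong) simp
  then have "usym n (p(s := t)) (Suc a) = ?e (Suc a) + t^2 * ?e a" for t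
    unfolding usym_eq_esym esym_remove[OF finite_atLeastAtMost assms] by simp
  moreover have "((\<lambda>t. ?e (Suc a) + t^2 * ?e a) has_real_derivative 2 * p s * ?e a) (at (p s))"
    by (auto intro!: derivative_eq_intros)
  ultimately show ?thesis
    unfolding dudp_def by (intro the_equality) (auto intro: DERIV_unique)
qed

lemma sum_off_diagonal:
  fixes f g :: "'a \<Rightarrow> 'b::comm_ring"
  assumes "finite X"
  shows "(\<Sum>s\<in>X. \<Sum>k\<in>X. if s = k then 0 else f s * g k) = sum f X * sum g X - (\<Sum>s\<in>X. f s * g s)"
proof -
  have "(\<Sum>k\<in>X. if s = k then 0 else f s * g k) = (\<Sum>k\<in>X. f s * g k) - f s * g s" if "s \<in> X" for s
    using assms that by (simp add: sum.If_cases Diff_eq[symmetric] sum_diff1)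
  then show ?thesis
    by (simp add: sum_subtractf sum_product)
qed

definition gform_poly :: "nat \<Rightarrow> (nat \<Rightarrow> real) \<Rightarrow> nat \<Rightarrow> nat \<Rightarrow> real" where
  "gform_poly n e a b = 4 * ((real n - real a) * (real n - real b - 1) * e a * e b
     - (\<Sum>l = 1..b. (real b - real a - 2 * real l) * e (a + l) * e (b - l)))"

lemma gform_eq_gform_poly:
  assumes "\<forall>s\<in>{1..n}. p s \<noteq> 0"
  shows "gform n (Suc a) (Suc b) p = gform_poly n (usym n p) a b"
proof -
  let ?N = "{1..n}"
  define E where "E c s = esym (?N - {s}) (\<lambda>i. (p i)^2) c" for c s
  have "gform n (Suc a) (Suc b) p = 4 * (\<Sum>s\<in>?N. \<Sum>k\<in>?N. if s = k then 0 else E a s * E b k)"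
    unfolding gform_def sum_distrib_left
    using assms by (intro sum.cong refl) (simp add: dudp_Suc E_def)
  also have "\<dots> = 4 * (sum (E a) ?N * sum (E b) ?N - (\<Sum>s\<in>?N. E a s * E b s))"
    by (simp add: sum_off_diagonal)
  also have "\<dots> = gform_poly n (usym n p) a b"
    unfolding E_def sum_esym_remove[OF finite_atLeastAtMost] sum_esym_remove_mult[OF finite_atLeastAtMost]
    by (simp add: gform_poly_def usym_eq_esym algebra_simps)
  finally show ?thesis .
qed

lemma mpoly_fun_diff: "mpoly_fun n f \<Longrightarrow> mpoly_fun n g \<Longrightarrow> mpoly_fun n (\<lambda>u. f u - g u)"
proof -
  assume "mpoly_fun n f" "mpoly_fun n g"
  then have "mpoly_fun n (\<lambda>u. f u + (- 1) * g u)"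
    by (intro mpoly_fun.add mpoly_fun.mult mpoly_fun.const)
  then show ?thesis by simp
qed

lemma mpoly_fun_sum:
  "finite A \<Longrightarrow> (\<And>l. l \<in> A \<Longrightarrow> mpoly_fun n (f l)) \<Longrightarrow> mpoly_fun n (\<lambda>u. \<Sum>l\<in>A. f l u)"
proof (induction A rule: finite_induct)
  case empty
  then show ?case using mpoly_fun.const[of n 0] by simp
next
  case (insert l A)
  then show ?case using mpoly_fun.add[of n "f l" "\<lambda>u. \<Sum>l\<in>A. f l u"] by simp
qed

lemma mpoly_fun_ucv: "mpoly_fun n (\<lambda>u. ucv n u (int k))"
proof -
  consider "k = 0" | "1 \<le> k" "k \<le> n" | "n < k" by linarith
  then show ?thesis
    by cases (auto simp: ucv_def intro: mpoly_fun.const mpoly_fun.var)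
qed

lemma mpoly_fun_gform_poly: "mpoly_fun n (\<lambda>u. gform_poly n (\<lambda>k. ucv n u (int k)) a b)"
  unfolding gform_poly_def
  by (intro mpoly_fun_diff mpoly_fun_sum mpoly_fun.mult mpoly_fun.const mpoly_fun_ucv finite_atLeastAtMost)

lemma has_real_derivative_ucv_upd:
  assumes "1 \<le> m" "m \<le> n"
  shows "((\<lambda>t. ucv n (u(m := t)) (int k)) has_real_derivative (if k = m then 1 else 0)) (at x)"
proof (cases "k = m")
  case True
  then show ?thesis using assms by (simp add: ucv_def DERIV_ident)
next
  case False
  then have "ucv n (u(m := t)) (int k) = ucv n u (int k)" for t
    by (simp add: ucv_def)
  then show ?thesis using False by simp
qed

lemma gform_poly_has_derivative:
  assumes "\<And>k. ((\<lambda>t. E t k) has_real_derivative E' k) (at x)"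
  shows "((\<lambda>t. gform_poly n (E t) a b) has_real_derivative
    4 * ((real n - real a) * (real n - real b - 1) * (E' a * E x b + E x a * E' b)
      - (\<Sum>l = 1..b. (real b - real a - 2 * real l) * (E' (a + l) * E x (b - l) + E x (a + l) * E' (b - l)))))
    (at x)"
  unfolding gform_poly_def by (auto intro!: derivative_eq_intros assms simp: algebra_simps)

lemma gform_poly_has_derivative_eta:
  assumes "0 < m" "a \<le> m" "b \<le> m"
  shows "((\<lambda>t. gform_poly (Suc m) (\<lambda>k. ucv (Suc m) (u(m := t)) (int k)) a b)
    has_real_derivative eta (Suc m) u (Suc a) (Suc b)) (at (u m))"
proof -
  let ?e = "\<lambda>k. ucv (Suc m) u (int k)"
  define \<delta> where "\<delta> k = (if k = m then 1 else 0 :: real)" for k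
  let ?S = "\<Sum>l = 1..b. (real b - real a - 2 * real l) * (\<delta> (a + l) * ?e (b - l) + ?e (a + l) * \<delta> (b - l))"
  have "((\<lambda>t. ucv (Suc m) (u(m := t)) (int k)) has_real_derivative \<delta> k) (at (u m))" for k
    unfolding \<delta>_def using assms(1) by (intro has_real_derivative_ucv_upd) auto
  from gform_poly_has_derivative[where E = "\<lambda>t k. ucv (Suc m) (u(m := t)) (int k)" and n = "Suc m", OF this]
  have deriv: "((\<lambda>t. gform_poly (Suc m) (\<lambda>k. ucv (Suc m) (u(m := t)) (int k)) a b) has_real_derivative
    4 * ((real (Suc m) - real a) * (real (Suc m) - real b - 1) * (\<delta> a * ?e b + ?e a * \<delta> b)
      - ?S)) (at (u m))"
    by simp
  \<comment> \<open>only the summand with a + l = m involves u m, since b - l < m\<close>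
  have "?S = (\<Sum>l = 1..b. if l = m - a then (real b - real a - 2 * real l) * ?e (b - l) else 0)"
    using assms by (intro sum.cong refl) (auto simp: \<delta>_def)
  also have "\<dots> = (if a < m \<and> m \<le> a + b then (real a + real b - 2 * real m) * ?e (a + b - m) else 0)"
    using assms by (auto simp: of_nat_diff algebra_simps)
  finally have sum_eq: "?S = (if a < m \<and> m \<le> a + b then (real a + real b - 2 * real m) * ?e (a + b - m) else 0)" .
  have eta_Suc: "eta (Suc m) u (Suc a) (Suc b) = 4 * (2 * real m - real a - real b) * ucv (Suc m) u (int a + int b - int m)"
    by (simp add: eta_def algebra_simps)
  have "4 * ((real (Suc m) - real a) * (real (Suc m) - real b - 1) * (\<delta> a * ?e b + ?e a * \<delta> b)
       - ?S) = eta (Suc m) u (Suc a) (Suc b)"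
  proof (cases "a = m")
    case True
    then show ?thesis using assms unfolding sum_eq eta_Suc by (simp add: \<delta>_def of_nat_diff)
  next
    case False
    then show ?thesis using assms unfolding sum_eq eta_Suc by (auto simp: \<delta>_def ucv_def of_nat_diff algebra_simps)
  qed
  with deriv show ?thesis by simp
qed

lemma mpoly_fun_cong: "mpoly_fun n F \<Longrightarrow> (\<And>k. k \<in> {1..n} \<Longrightarrow> u k = v k) \<Longrightarrow> F u = F v"
  by (induction rule: mpoly_fun.induct) auto

lemma mpoly_fun_on_line: "mpoly_fun n F \<Longrightarrow> \<exists>q. \<forall>t. F (\<lambda>k. c k + t * v k) = poly q t"
proof (induction rule: mpoly_fun.induct)
  case (const c0)
  show ?case by (rule exI[of _ "[:c0:]"]) simp
next
  case (var k)
  show ?case by (rule exI[of _ "[:c k, v k:]"]) (simp add: algebra_simps)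
next
  case (add f g)
  then obtain q1 q2 where "\<forall>t. f (\<lambda>k. c k + t * v k) = poly q1 t" "\<forall>t. g (\<lambda>k. c k + t * v k) = poly q2 t"
    by blast
  then show ?case by (intro exI[of _ "q1 + q2"]) simp
next
  case (mult f g)
  then obtain q1 q2 where "\<forall>t. f (\<lambda>k. c k + t * v k) = poly q1 t" "\<forall>t. g (\<lambda>k. c k + t * v k) = poly q2 t"
    by blast
  then show ?case by (intro exI[of _ "q1 * q2"]) simp
qed

lemma poly_eq_0_if_eventually_0:
  fixes q :: "real poly"
  assumes "\<forall>\<^sub>F t in at x. poly q t = 0"
  shows "q = 0"
proof (rule ccontr)
  assume "q \<noteq> 0"
  from assms obtain d where "d > 0" and d: "\<And>t. t \<noteq> x \<Longrightarrow> dist t x < d \<Longrightarrow> poly q t = 0"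
    unfolding eventually_at by blast
  have "{x<..<x + d} \<subseteq> {t. poly q t = 0}"
    using d by (auto simp: dist_real_def)
  with poly_roots_finite[OF \<open>q \<noteq> 0\<close>] have "finite {x<..<x + d}"
    by (rule finite_subset[rotated])
  with \<open>d > 0\<close> show False using infinite_Ioo[of x "x + d"] by simp
qed

lemma prod_diff_eq_esym:
  fixes r :: "'a \<Rightarrow> 'b::comm_ring_1"
  assumes "finite N"
  shows "(\<Prod>s\<in>N. z - r s) = (\<Sum>k = 0..card N. (-1)^k * esym N r k * z^(card N - k))"
proof -
  have "(\<Prod>s\<in>N. - r s + z) = (\<Sum>B\<in>Pow N. (-1)^card B * (\<Prod>s\<in>B. r s) * z^(card N - card B))"
    unfolding prod_add[OF assms]
  proof (intro sum.cong refl)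
    fix B assume "B \<in> Pow N"
    with assms have "finite B" "B \<subseteq> N" by (auto dest: finite_subset)
    then show "(\<Prod>s\<in>B. - r s) * (\<Prod>s\<in>N - B. z) = (-1)^card B * (\<Prod>s\<in>B. r s) * z^(card N - card B)"
      using assms by (simp add: prod_uminus card_Diff_subset)
  qed
  also have "\<dots> = (\<Sum>k = 0..card N. \<Sum>B | B \<in> Pow N \<and> card B = k. (-1)^card B * (\<Prod>s\<in>B. r s) * z^(card N - card B))"
    using assms by (intro sum.group[symmetric]) (auto simp: card_mono)
  also have "\<dots> = (\<Sum>k = 0..card N. (-1)^k * esym N r k * z^(card N - k))"
    unfolding esym_def by (intro sum.cong refl) (auto simp: sum_distrib_left sum_distrib_right mult_ac intro!: sum.cong)
  finally show ?thesis by simp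
qed

lemma esym_eq_if_distinct_roots:
  fixes c :: "nat \<Rightarrow> real"
  assumes "finite N" "inj_on r N" "c 0 = 1"
    and roots: "\<And>s. s \<in> N \<Longrightarrow> (\<Sum>k = 0..card N. (-1)^k * c k * r s ^ (card N - k)) = 0"
    and "k \<le> card N"
  shows "c k = esym N r k"
proof (cases "k = 0")
  case True
  then show ?thesis using assms by simp
next
  case False
  let ?n = "card N"
  define q where "q = (\<Sum>k = 1..?n. monom ((-1)^k * (c k - esym N r k)) (?n - k))"
  have poly_q: "poly q y = (\<Sum>k = 0..?n. (-1)^k * c k * y^(?n - k)) - (\<Prod>s\<in>N. y - r s)" for y
    unfolding q_def prod_diff_eq_esym[OF assms(1)] sum_subtractf[symmetric]
    using assms(1,3) by (simp add: poly_sum poly_monom sum.atLeast_Suc_atMost algebra_simps)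
  have "q = 0"
  proof (rule ccontr)
    assume "q \<noteq> 0"
    have "r ` N \<subseteq> {y. poly q y = 0}"
      using roots assms(1) by (auto simp: poly_q)
    then have "?n \<le> card {y. poly q y = 0}"
      using card_mono[OF poly_roots_finite[OF \<open>q \<noteq> 0\<close>]] card_image[OF assms(2)] by metis
    also have "\<dots> \<le> degree q"
      using \<open>q \<noteq> 0\<close> by (rule card_poly_roots_bound)
    also have "degree q \<le> ?n - 1"
      unfolding q_def by (intro degree_sum_le) (auto intro: order.trans[OF degree_monom_le])
    finally show False
      using \<open>q \<noteq> 0\<close> by (cases "?n = 0") (auto simp: q_def)
  qed
  have "coeff q (?n - k) = (\<Sum>k' = 1..?n. if k' = k then (-1)^k' * (c k' - esym N r k') else 0)"
    unfolding q_def coeff_sum coeff_monom using assms(5) by (intro sum.cong refl) auto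
  also have "\<dots> = (-1)^k * (c k - esym N r k)"
    using False assms(5) by simp
  finally show ?thesis
    using \<open>q = 0\<close> by simp
qed

lemma prod_half_integers_mult_neg:
  assumes "j < n"
  shows "(\<Prod>s = 1..n. real j + 1/2 - real s) * (\<Prod>s = 1..n. real j + 3/2 - real s) < 0"
proof -
  let ?f = "\<lambda>s. (real j + 1/2 - real s) * (real j + 3/2 - real s)"
  have "(\<Prod>s = 1..n. real j + 1/2 - real s) * (\<Prod>s = 1..n. real j + 3/2 - real s)
      = (\<Prod>s = 1..n. ?f s)"
    by (simp add: prod.distrib)
  also have "\<dots> = ?f (Suc j) * (\<Prod>s \<in> {1..n} - {Suc j}. ?f s)"
    using assms by (intro prod.remove) auto
  finally have split: "(\<Prod>s = 1..n. real j + 1/2 - real s) * (\<Prod>s = 1..n. real j + 3/2 - real s)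
      = ?f (Suc j) * (\<Prod>s \<in> {1..n} - {Suc j}. ?f s)" .
  have "0 < (\<Prod>s \<in> {1..n} - {Suc j}. ?f s)"
  proof (rule prod_pos)
    fix s assume "s \<in> {1..n} - {Suc j}"
    then consider "s \<le> j" | "Suc j < s" by fastforce
    then show "0 < ?f s"
      by cases (auto intro: mult_pos_pos mult_neg_neg)
  qed
  then show ?thesis
    unfolding split by (simp add: mult_neg_pos)
qed

lemma exists_root_between:
  fixes f :: "real \<Rightarrow> real"
  assumes "\<And>x. isCont f x" "a \<le> b" "f a * f b < 0"
  shows "\<exists>x. a < x \<and> x < b \<and> f x = 0"
proof -
  obtain x where "a \<le> x" "x \<le> b" "f x = 0"
    using IVT[of f a 0 b] IVT2[of f b 0 a] assms by (cases "f a < 0") (auto simp: mult_less_0_iff)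
  moreover have "x \<noteq> a" "x \<noteq> b"
    using \<open>f x = 0\<close> assms(3) by auto
  ultimately show ?thesis by (intro exI[of _ x]) auto
qed

lemma roots_near_integers:
  fixes f :: "real \<Rightarrow> real"
  assumes "\<And>y. isCont f y" and "\<And>j. j < n \<Longrightarrow> f (real j + 1/2) * f (real j + 3/2) < 0"
  shows "\<exists>r. inj_on r {1..n} \<and> (\<forall>s\<in>{1..n}. 0 < r s \<and> f (r s) = 0)"
proof -
  have "\<exists>x. real s - 1/2 < x \<and> x < real s + 1/2 \<and> f x = 0" if "s \<in> {1..n}" for s
  proof -
    from that obtain j where "s = Suc j" "j < n"
      by (cases s) auto
    then show ?thesis
      using exists_root_between[OF assms(1), of "real j + 1/2" "real j + 3/2"] assms(2)
      by (auto simp: algebra_simps)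
  qed
  then obtain r where r: "\<And>s. s \<in> {1..n} \<Longrightarrow> real s - 1/2 < r s \<and> r s < real s + 1/2 \<and> f (r s) = 0"
    by metis
  have "inj_on r {1..n}"
  proof (rule inj_onI)
    fix s s' assume "s \<in> {1..n}" "s' \<in> {1..n}" "r s = r s'"
    then have "real s < real s' + 1" "real s' < real s + 1"
      using r[of s] r[of s'] by linarith+
    then show "s = s'" by linarith
  qed
  moreover have "0 < r s" if "s \<in> {1..n}" for s
    using r[OF that] that by auto
  ultimately show ?thesis
    using r by blast
qed

lemma eventually_usym_on_line:
  "\<forall>\<^sub>F t in at 0. \<exists>p. (\<forall>s\<in>{1..n}. p s \<noteq> 0) \<and>
     (\<forall>k\<in>{1..n}. usym n p k = esym {1..n} real k + t * v k)"
proof -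
  let ?N = "{1..n}"
  define w where "w k = (if k = 0 then 0 else v k)" for k
  define a where "a t k = esym ?N real k + t * w k" for t k
  define F where "F t y = (\<Sum>k = 0..n. (-1)^k * a t k * y^(n - k))" for t y :: real
  have F_0: "F 0 y = (\<Prod>s\<in>?N. y - real s)" for y
    unfolding F_def a_def prod_diff_eq_esym[OF finite_atLeastAtMost] by simp
  \<comment> \<open>the sign changes of F 0 at the half-integers persist for t near 0\<close>
  have "\<forall>\<^sub>F t in at 0. F t (real j + 1/2) * F t (real j + 3/2) < 0" if "j < n" for j
  proof (rule order_tendstoD(2))
    show "((\<lambda>t. F t (real j + 1/2) * F t (real j + 3/2)) \<longlongrightarrow> F 0 (real j + 1/2) * F 0 (real j + 3/2)) (at 0)"
      unfolding F_def a_def by (intro tendsto_intros)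
    show "F 0 (real j + 1/2) * F 0 (real j + 3/2) < 0"
      unfolding F_0 using prod_half_integers_mult_neg[OF that] .
  qed
  then have "\<forall>\<^sub>F t in at 0. \<forall>j\<in>{..<n}. F t (real j + 1/2) * F t (real j + 3/2) < 0"
    by (intro eventually_ball_finite) auto
  then show ?thesis
  proof (rule eventually_mono)
    fix t assume "\<forall>j\<in>{..<n}. F t (real j + 1/2) * F t (real j + 3/2) < 0"
    moreover have "isCont (F t) y" for y
      unfolding F_def by (intro continuous_intros)
    ultimately obtain r where "inj_on r ?N" and r: "\<And>s. s \<in> ?N \<Longrightarrow> 0 < r s \<and> F t (r s) = 0"
      using roots_near_integers[of "F t" n] by auto
    define p where "p s = sqrt (r s)" for s
    have "usym n p k = esym ?N r k" for k
      unfolding usym_eq_esym p_def using r by (intro esym_cong) (simp add: less_imp_le)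
    moreover have "esym ?N r k = a t k" if "k \<le> n" for k
      using r \<open>inj_on r ?N\<close> that by (intro esym_eq_if_distinct_roots[symmetric]) (auto simp: a_def w_def F_def)
    ultimately show "\<exists>p. (\<forall>s\<in>?N. p s \<noteq> 0) \<and> (\<forall>k\<in>?N. usym n p k = esym ?N real k + t * v k)"
      using r by (intro exI[of _ p]) (fastforce simp: p_def a_def w_def)
  qed
qed

lemma mpoly_fun_eq_if_eq_on_usym:
  assumes "mpoly_fun n F" "mpoly_fun n G"
    and eq: "\<And>p. \<forall>s\<in>{1..n}. p s \<noteq> 0 \<Longrightarrow> F (usym n p) = G (usym n p)"
  shows "F = G"
proof
  fix u
  define c where "c k = esym {1..n} real k" for k
  have D: "mpoly_fun n (\<lambda>v. F v - G v)"
    using assms(1,2) by (rule mpoly_fun_diff)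
  then obtain q where q: "\<And>t. F (\<lambda>k. c k + t * (u k - c k)) - G (\<lambda>k. c k + t * (u k - c k)) = poly q t"
    using mpoly_fun_on_line[of n "\<lambda>v. F v - G v" c "\<lambda>k. u k - c k"] by blast
  have "\<forall>\<^sub>F t in at 0. poly q t = 0"
    using eventually_usym_on_line[of n "\<lambda>k. u k - c k"]
  proof (rule eventually_mono)
    fix t
    assume "\<exists>p. (\<forall>s\<in>{1..n}. p s \<noteq> 0) \<and> (\<forall>k\<in>{1..n}. usym n p k = esym {1..n} real k + t * (u k - c k))"
    then obtain p where "\<forall>s\<in>{1..n}. p s \<noteq> 0" "\<forall>k\<in>{1..n}. usym n p k = c k + t * (u k - c k)"
      unfolding c_def by blast
    then show "poly q t = 0"
      using mpoly_fun_cong[OF D, of "\<lambda>k. c k + t * (u k - c k)" "usym n p"] eq q by simp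
  qed
  then have "q = 0"
    by (rule poly_eq_0_if_eventually_0)
  then show "F u = G u"
    using q[of 1] by simp
qed

lemma det_nonzero_if_anti_triangular:
  fixes A :: "'a::idom mat"
  assumes A: "A \<in> carrier_mat n n"
    and above: "\<And>i j. i < n \<Longrightarrow> j < n \<Longrightarrow> i + j < n - 1 \<Longrightarrow> A $$ (i, j) = 0"
    and anti_diag: "\<And>i. i < n \<Longrightarrow> A $$ (i, n - 1 - i) \<noteq> 0"
  shows "det A \<noteq> 0"
proof -
  define \<rho> where "\<rho> i = (if i < n then n - 1 - i else i)" for i
  have "bij_betw \<rho> {0..<n} {0..<n}"
    by (intro bij_betw_byWitness[of _ \<rho>]) (auto simp: \<rho>_def)
  then have \<rho>: "\<rho> permutes {0..<n}"
    by (rule bij_imp_permutes) (simp add: \<rho>_def)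
  define B where "B = mat n n (\<lambda>(i, j). A $$ (\<rho> i, j))"
  have "A $$ (n - 1 - i, i) \<noteq> 0" if "i < n" for i
    using anti_diag[of "n - 1 - i"] that by (simp add: diff_diff_cancel)
  have "det B = (\<Prod>i = 0..<n. A $$ (n - 1 - i, i))"
    by (subst det_upper_triangular[of _ n])
      (use above in \<open>auto simp: B_def \<rho>_def upper_triangular_def prod_list_diag_prod\<close>)
  also have "\<dots> \<noteq> 0"
    using \<open>\<And>i. i < n \<Longrightarrow> A $$ (n - 1 - i, i) \<noteq> 0\<close> by simp
  finally have "det B \<noteq> 0" .
  moreover have "det B = signof \<rho> * det A"
    unfolding B_def by (rule det_permute_rows[OF A \<rho>])
  ultimately show ?thesis
    by auto
qed

lemma eta_eq: "eta n u i j = 4 * (2 * real n - real (i + j)) * ucv n u (int (i + j) - int n - 1)"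
  by (simp add: eta_def)

lemma eta_hankel: "i + j = i' + j' \<Longrightarrow> eta n u i j = eta n u i' j'"
  by (simp add: eta_eq)

lemma eta_eq_0_above_anti_diagonal: "i + j < n + 1 \<Longrightarrow> eta n u i j = 0"
  by (simp add: eta_eq ucv_def)

lemma eta_anti_diagonal: "i \<in> {1..n} \<Longrightarrow> eta n u i (n - i + 1) = 4 * (real n - 1)"
  by (simp add: eta_eq ucv_def)

lemma det_eta_nonzero:
  assumes "2 \<le> n"
  shows "det (mat n n (\<lambda>(a, b). eta n u (a + 1) (b + 1))) \<noteq> 0"
proof (rule det_nonzero_if_anti_triangular)
  fix i assume "i < n"
  then have "eta n u (i + 1) (n - 1 - i + 1) = 4 * (real n - 1)"
    using eta_anti_diagonal[of "i + 1" n u] by (simp add: Suc_diff_Suc)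
  then show "mat n n (\<lambda>(a, b). eta n u (a + 1) (b + 1)) $$ (i, n - 1 - i) \<noteq> 0"
    using assms \<open>i < n\<close> by simp
qed (auto simp: eta_eq_0_above_anti_diagonal)

theorem mainTheorem8:
  fixes n :: nat
  assumes "n \<ge> 2"
  shows
    "(\<exists>G. \<forall>i\<in>{1..n}. \<forall>j\<in>{1..n}. mpoly_fun n (G i j) \<and>
        (\<forall>p. (\<forall>s\<in>{1..n}. p s \<noteq> 0) \<longrightarrow> gform n i j p = G i j (usym n p)))
     \<and> (\<forall>i\<in>{1..n}. \<forall>j\<in>{1..n}. \<forall>G. mpoly_fun n G \<longrightarrow>
          (\<forall>p. (\<forall>s\<in>{1..n}. p s \<noteq> 0) \<longrightarrow> gform n i j p = G (usym n p)) \<longrightarrow>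
          (\<forall>u. ((\<lambda>t. G (u(n - 1 := t))) has_real_derivative eta n u i j) (at (u (n - 1)))))
     \<and> (\<forall>u. (\<forall>i\<in>{1..n}. \<forall>j\<in>{1..n}. \<forall>i'\<in>{1..n}. \<forall>j'\<in>{1..n}.
               i + j = i' + j' \<longrightarrow> eta n u i j = eta n u i' j')
           \<and> (\<forall>i\<in>{1..n}. \<forall>j\<in>{1..n}. i + j < n + 1 \<longrightarrow> eta n u i j = 0)
           \<and> (\<forall>i\<in>{1..n}. eta n u i (n - i + 1) = 4 * (real n - 1))
           \<and> det (mat n n (\<lambda>(a, b). eta n u (a + 1) (b + 1))) \<noteq> 0)"
proof -
  define G where "G i j u = gform_poly n (\<lambda>k. ucv n u (int k)) (i - 1) (j - 1)" for i j u
  have G_poly: "mpoly_fun n (G i j)" for i j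
    unfolding G_def by (rule mpoly_fun_gform_poly)
  have gform_G: "gform n i j p = G i j (usym n p)"
    if "i \<in> {1..n}" "j \<in> {1..n}" "\<forall>s\<in>{1..n}. p s \<noteq> 0" for i j p
    using that gform_eq_gform_poly[of n p "i - 1" "j - 1"] by (simp add: G_def ucv_usym)
  have deriv: "((\<lambda>t. H (u(n - 1 := t))) has_real_derivative eta n u i j) (at (u (n - 1)))"
    if "i \<in> {1..n}" "j \<in> {1..n}" "mpoly_fun n H"
      and H: "\<forall>p. (\<forall>s\<in>{1..n}. p s \<noteq> 0) \<longrightarrow> gform n i j p = H (usym n p)" for i j H u
  proof -
    have "H = G i j"
      using that(3) G_poly by (rule mpoly_fun_eq_if_eq_on_usym) (use H gform_G that(1,2) in simp)
    moreover obtain m where "n = Suc m" "0 < m"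
      using assms by (cases n) auto
    moreover have "i - 1 \<le> m" "j - 1 \<le> m"
      using that(1,2) \<open>n = Suc m\<close> by auto
    ultimately show ?thesis
      using gform_poly_has_derivative_eta[of m "i - 1" "j - 1" u] that(1,2) by (simp add: G_def)
  qed
  show ?thesis
  proof (intro conjI allI ballI impI exI[of _ G])
  qed (fact det_eta_nonzero[OF assms] |
      blast intro: G_poly gform_G deriv eta_hankel eta_eq_0_above_anti_diagonal eta_anti_diagonal)+
qed

end
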